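(* Let $n\ge2$ and let $\overline{x}=x_1,\dots,x_n$ be variables. For a subsequence $x_{i_1},\dots,x_{i_k}$ let $\pi_k:S^{fd}_n(\mathbb{Q})\to S^{fd}_k(\mathbb{Q})$ be the projection $\pi_k(p)=\{\exists x_{i_{k+1}},\dots,x_{i_n}\,\phi(x_1,\dots,x_n):\phi\in p\}$, where $x_{i_{k+1}},\dots,x_{i_n}$ are the remaining variables. Let $S^{<}_n(\mathbb{Q})\subseteq S^{fd}_n(\mathbb{Q})$ be the set of types $p$ with $x_1<x_2<\cdots<x_n\in p$. Then the map $\nabla:S^{<}_n(\mathbb{Q})\to S^{fd}_1(\mathbb{Q})\times S^{<}_{n-1}(\mathbb{Q})$, $\nabla(p)=\langle\pi_1(p),\pi_{n-1}(p)\rangle$, where $\pi_1$ is the projection onto $x_1$ and $\pi_{n-1}$ the projection onto $x_2,\dots,x_n$, is injective.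
   Context: We work in the theory of the dense linear order $\langle\mathbb{Q},\le\rangle$ (DLO). $S_n(\mathbb{Q})$ is the set of complete $n$-types with parameters from $\mathbb{Q}$, and $S^{fd}_n(\mathbb{Q})\subseteq S_n(\mathbb{Q})$ is the set of those types that are definable over a finite set of parameters $Q_0\subseteq\mathbb{Q}$, i.e. for every formula $\phi(\overline{x},\overline{y})$ without parameters there is a formula $\psi(\overline{y},\overline{b})$ with $\overline b$ from $Q_0$ such that $\phi(\overline{x},\overline{a})\in p\iff\psi(\overline{a},\overline{b})$ holds. *)

theory Defs
  imports Complex_Main
begin

text \<open>Terms: variables (de Bruijn indices) and parameters (elements of Q).
  The free variable with index i stands for x_(i+1).\<close>
datatype tm = Var nat | Par rat

datatype fm = Le tm tm | Eq tm tm | Neg fm | Conj fm fm | Ex fm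

definition Lt :: "tm \<Rightarrow> tm \<Rightarrow> fm" where
  "Lt s t = Neg (Le t s)"

fun tval :: "(nat \<Rightarrow> rat) \<Rightarrow> tm \<Rightarrow> rat" where
  "tval e (Var i) = e i"
| "tval e (Par a) = a"

fun eval :: "(nat \<Rightarrow> rat) \<Rightarrow> fm \<Rightarrow> bool" where
  "eval e (Le s t) = (tval e s \<le> tval e t)"
| "eval e (Eq s t) = (tval e s = tval e t)"
| "eval e (Neg \<phi>) = (\<not> eval e \<phi>)"
| "eval e (Conj \<phi> \<psi>) = (eval e \<phi> \<and> eval e \<psi>)"
| "eval e (Ex \<phi>) = (\<exists>q. eval (case_nat q e) \<phi>)"

fun tfv :: "tm \<Rightarrow> nat set" where
  "tfv (Var i) = {i}"
| "tfv (Par a) = {}"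

fun fvars :: "fm \<Rightarrow> nat set" where
  "fvars (Le s t) = tfv s \<union> tfv t"
| "fvars (Eq s t) = tfv s \<union> tfv t"
| "fvars (Neg \<phi>) = fvars \<phi>"
| "fvars (Conj \<phi> \<psi>) = fvars \<phi> \<union> fvars \<psi>"
| "fvars (Ex \<phi>) = {i. Suc i \<in> fvars \<phi>}"

fun tparams :: "tm \<Rightarrow> rat set" where
  "tparams (Var i) = {}"
| "tparams (Par a) = {a}"

fun params :: "fm \<Rightarrow> rat set" where
  "params (Le s t) = tparams s \<union> tparams t"
| "params (Eq s t) = tparams s \<union> tparams t"
| "params (Neg \<phi>) = params \<phi>"
| "params (Conj \<phi> \<psi>) = params \<phi> \<union> params \<psi>"
| "params (Ex \<phi>) = params \<phi>"

fun tsubst :: "(nat \<Rightarrow> tm) \<Rightarrow> tm \<Rightarrow> tm" where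
  "tsubst \<sigma> (Var i) = \<sigma> i"
| "tsubst \<sigma> (Par a) = Par a"

fun tshift :: "tm \<Rightarrow> tm" where
  "tshift (Var i) = Var (Suc i)"
| "tshift (Par a) = Par a"

fun subst :: "(nat \<Rightarrow> tm) \<Rightarrow> fm \<Rightarrow> fm" where
  "subst \<sigma> (Le s t) = Le (tsubst \<sigma> s) (tsubst \<sigma> t)"
| "subst \<sigma> (Eq s t) = Eq (tsubst \<sigma> s) (tsubst \<sigma> t)"
| "subst \<sigma> (Neg \<phi>) = Neg (subst \<sigma> \<phi>)"
| "subst \<sigma> (Conj \<phi> \<psi>) = Conj (subst \<sigma> \<phi>) (subst \<sigma> \<psi>)"
| "subst \<sigma> (Ex \<phi>) = Ex (subst (case_nat (Var 0) (\<lambda>j. tshift (\<sigma> j))) \<phi>)"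

text \<open>Complete n-types over Q: complete sets of formulas in x_1..x_n with parameters
  from Q that are consistent with the elementary diagram of Q, i.e. finitely
  satisfiable in Q.\<close>
definition is_type :: "nat \<Rightarrow> fm set \<Rightarrow> bool" where
  "is_type n p \<longleftrightarrow>
     p \<subseteq> {\<phi>. fvars \<phi> \<subseteq> {..<n}} \<and>
     (\<forall>F. finite F \<and> F \<subseteq> p \<longrightarrow> (\<exists>e. \<forall>\<phi>\<in>F. eval e \<phi>)) \<and>
     (\<forall>\<phi>. fvars \<phi> \<subseteq> {..<n} \<longrightarrow> \<phi> \<in> p \<or> Neg \<phi> \<in> p)"

definition S :: "nat \<Rightarrow> fm set set" where
  "S n = {p. is_type n p}"

text \<open>Variables x_i have indices i-1 < n; y_j have indices n+j-1.\<close>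
definition definable_over :: "nat \<Rightarrow> fm set \<Rightarrow> rat set \<Rightarrow> bool" where
  "definable_over n p Q0 \<longleftrightarrow>
     (\<forall>\<phi> m. params \<phi> = {} \<and> fvars \<phi> \<subseteq> {..<n+m} \<longrightarrow>
        (\<exists>\<psi>. params \<psi> \<subseteq> Q0 \<and> fvars \<psi> \<subseteq> {..<m} \<and>
           (\<forall>a :: nat \<Rightarrow> rat.
              subst (\<lambda>i. if i < n then Var i else Par (a (i - n))) \<phi> \<in> p
              \<longleftrightarrow> eval a \<psi>)))"

definition S_fd :: "nat \<Rightarrow> fm set set" where
  "S_fd n = {p \<in> S n. \<exists>Q0. finite Q0 \<and> definable_over n p Q0}"

text \<open>The formula x_1 < x_2 < ... < x_k (the empty conjunction is x_1 = x_1).\<close>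
definition lt_chain :: "nat \<Rightarrow> fm" where
  "lt_chain k = foldr Conj (map (\<lambda>i. Lt (Var i) (Var (Suc i))) [0..<k - 1])
                 (Eq (Var 0) (Var 0))"

definition S_lt :: "nat \<Rightarrow> fm set set" where
  "S_lt n = {p \<in> S_fd n. lt_chain n \<in> p}"

text \<open>Projection onto the subsequence x_(\<rho> 0 + 1), ..., x_(\<rho> (k-1) + 1), renamed to
  x_1..x_k: the formulas \<psi>(x_1..x_k) with \<psi>(x_(\<rho> 0+1),...,x_(\<rho>(k-1)+1)) \<in> p
  (this is the complete type generated by the existential projections).\<close>
definition proj :: "(nat \<Rightarrow> nat) \<Rightarrow> nat \<Rightarrow> fm set \<Rightarrow> fm set" where
  "proj \<rho> k p = {\<psi>. fvars \<psi> \<subseteq> {..<k} \<and> subst (\<lambda>i. Var (\<rho> i)) \<psi> \<in> p}"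

definition nabla :: "nat \<Rightarrow> fm set \<Rightarrow> fm set \<times> fm set" where
  "nabla n p = (proj (\<lambda>i. i) 1 p, proj Suc (n - 1) p)"

end

theory Submission
  imports Defs
begin

(* Two assignments that induce the same order on the variables and parameters of a formula
   satisfy it equally; the quantifier step is one move of a back-and-forth argument, which works
   because (Q, \<le>) is dense without endpoints. Hence a complete type is determined by the atoms
   s \<le> t it contains. In a type containing x_1 < ... < x_n the atoms between two variables are
   fixed, those between two parameters are decided outright, and an atom comparing x_i with a
   parameter lies in \<pi>_1(p) if i = 1 and in \<pi>_{n-1}(p) otherwise. *)

lemma exists_between_finite:
  fixes X Y :: "'a::unbounded_dense_linorder set"
  assumes "finite X" "finite Y" "\<forall>x\<in>X. \<forall>y\<in>Y. x < y"
  shows "\<exists>z. (\<forall>x\<in>X. x < z) \<and> (\<forall>y\<in>Y. z < y)"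
proof (cases "X = {}"; cases "Y = {}")
  assume "X = {}" "Y \<noteq> {}"
  then show ?thesis using assms lt_ex[of "Min Y"] by (metis Min_gr_iff empty_iff)
next
  assume "X \<noteq> {}" "Y = {}"
  then show ?thesis using assms gt_ex[of "Max X"] by (metis Max_less_iff empty_iff)
next
  assume "X \<noteq> {}" "Y \<noteq> {}"
  then have "Max X < Min Y" using assms by simp
  then show ?thesis using assms dense by (metis Max_less_iff Min_gr_iff \<open>X \<noteq> {}\<close> \<open>Y \<noteq> {}\<close>)
qed auto

definition order_similar_on :: "'i set \<Rightarrow> ('i \<Rightarrow> 'a::linorder) \<Rightarrow> ('i \<Rightarrow> 'a) \<Rightarrow> bool" where
  "order_similar_on I u v \<longleftrightarrow> (\<forall>i\<in>I. \<forall>j\<in>I. u i \<le> u j \<longleftrightarrow> v i \<le> v j)"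

lemma order_similar_on_sym: "order_similar_on I u v \<Longrightarrow> order_similar_on I v u"
  unfolding order_similar_on_def by blast

lemma order_similar_on_subset: "order_similar_on I u v \<Longrightarrow> J \<subseteq> I \<Longrightarrow> order_similar_on J u v"
  unfolding order_similar_on_def by blast

lemma order_similar_on_extend:
  fixes u v :: "'i \<Rightarrow> 'a::unbounded_dense_linorder"
  assumes "finite I" and sim: "order_similar_on I u v"
  shows "\<exists>y. \<forall>i\<in>I. (x \<le> u i \<longleftrightarrow> y \<le> v i) \<and> (u i \<le> x \<longleftrightarrow> v i \<le> y)"
proof (cases "\<exists>i\<in>I. u i = x")
  case True
  then obtain k where "k \<in> I" "u k = x" by blast
  then show ?thesis using sim unfolding order_similar_on_def by blast
next
  case False
  define L where "L = {i\<in>I. u i < x}"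
  define U where "U = {i\<in>I. x < u i}"
  have "v i < v j" if "i \<in> L" "j \<in> U" for i j
  proof -
    have "\<not> u j \<le> u i" using that unfolding L_def U_def by auto
    then show ?thesis using sim that unfolding order_similar_on_def L_def U_def by auto
  qed
  then have "\<forall>a\<in>v ` L. \<forall>b\<in>v ` U. a < b" by blast
  moreover have "finite L" "finite U" using \<open>finite I\<close> unfolding L_def U_def by simp_all
  ultimately obtain y where y: "\<forall>a\<in>v ` L. a < y" "\<forall>b\<in>v ` U. y < b"
    using exists_between_finite[of "v ` L" "v ` U"] by blast
  have "(x \<le> u i \<longleftrightarrow> y \<le> v i) \<and> (u i \<le> x \<longleftrightarrow> v i \<le> y)" if "i \<in> I" for i
  proof (cases "u i < x")
    case True
    then have "v i < y" using y that unfolding L_def by auto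
    then show ?thesis using True by auto
  next
    case False
    then have "i \<in> U" using that \<open>\<not> (\<exists>i\<in>I. u i = x)\<close> unfolding U_def by force
    then have "x < u i" "y < v i" using y unfolding U_def by auto
    then show ?thesis by auto
  qed
  then show ?thesis by blast
qed

definition terms :: "fm \<Rightarrow> tm set" where
  "terms \<phi> = Var ` fvars \<phi> \<union> Par ` params \<phi>"

lemma finite_fvars: "finite (fvars \<phi>)"
proof (induction \<phi>)
  case (Le s t) then show ?case by (cases s; cases t) auto
next
  case (Eq s t) then show ?case by (cases s; cases t) auto
next
  case (Ex \<phi>)
  then show ?case using finite_vimageI[of "fvars \<phi>" Suc] by (simp add: vimage_def)
qed auto

lemma finite_params: "finite (params \<phi>)"
proof (induction \<phi>)
  case (Le s t) then show ?case by (cases s; cases t) auto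
next
  case (Eq s t) then show ?case by (cases s; cases t) auto
qed auto

lemma finite_terms: "finite (terms \<phi>)"
  unfolding terms_def using finite_fvars finite_params by blast

lemma terms_atom:
  "terms (Le s t) = {s, t}" "terms (Eq s t) = {s, t}"
  unfolding terms_def by (cases s; cases t; auto)+

lemma terms_Neg: "terms (Neg \<phi>) = terms \<phi>"
  unfolding terms_def by simp

lemma terms_Conj: "terms (Conj \<phi> \<psi>) = terms \<phi> \<union> terms \<psi>"
  unfolding terms_def by auto

lemma terms_Ex_cases:
  assumes "t \<in> terms \<phi>"
  shows "t = Var 0 \<or> (\<exists>t'\<in>terms (Ex \<phi>). t = tshift t')"
proof (cases t)
  case (Var i)
  show ?thesis
  proof (cases i)
    case (Suc k)
    then have "Var k \<in> terms (Ex \<phi>)" using assms Var by (auto simp: terms_def)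
    then show ?thesis using Var Suc by force
  qed (simp add: Var)
next
  case (Par a)
  then have "Par a \<in> terms (Ex \<phi>)" using assms by (auto simp: terms_def)
  then show ?thesis using Par by force
qed

lemma tval_case_nat_tshift: "tval (case_nat q e) (tshift t) = tval e t"
  by (cases t) auto

lemma tfv_subset_fvars: "t \<in> terms \<phi> \<Longrightarrow> tfv t \<subseteq> fvars \<phi>"
  unfolding terms_def by auto

lemma order_similar_on_terms_Ex:
  assumes sim: "order_similar_on (terms (Ex \<phi>)) (tval e) (tval e')"
  shows "\<exists>q'. order_similar_on (terms \<phi>) (tval (case_nat q e)) (tval (case_nat q' e'))"
proof -
  obtain q' where q': "\<forall>t\<in>terms (Ex \<phi>).
      (q \<le> tval e t \<longleftrightarrow> q' \<le> tval e' t) \<and> (tval e t \<le> q \<longleftrightarrow> tval e' t \<le> q')"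
    using order_similar_on_extend[OF finite_terms sim] by blast
  have shifted: "(tval (case_nat q e) t = q \<and> tval (case_nat q' e') t = q') \<or>
      (\<exists>t'\<in>terms (Ex \<phi>). tval (case_nat q e) t = tval e t' \<and> tval (case_nat q' e') t = tval e' t')"
    if "t \<in> terms \<phi>" for t
    using terms_Ex_cases[OF that] by (auto simp: tval_case_nat_tshift)
  have "order_similar_on (terms \<phi>) (tval (case_nat q e)) (tval (case_nat q' e'))"
    unfolding order_similar_on_def
  proof (intro ballI)
    fix s t assume "s \<in> terms \<phi>" "t \<in> terms \<phi>"
    from shifted[OF this(1)] shifted[OF this(2)]
    show "tval (case_nat q e) s \<le> tval (case_nat q e) t \<longleftrightarrow>
        tval (case_nat q' e') s \<le> tval (case_nat q' e') t"
      using q' sim unfolding order_similar_on_def by auto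
  qed
  then show ?thesis by blast
qed

lemma eval_order_similar:
  "order_similar_on (terms \<phi>) (tval e) (tval e') \<Longrightarrow> eval e \<phi> = eval e' \<phi>"
proof (induction \<phi> arbitrary: e e')
  case (Le s t)
  then show ?case unfolding order_similar_on_def terms_atom by simp
next
  case (Eq s t)
  then show ?case unfolding order_similar_on_def terms_atom by (simp add: order.eq_iff)
next
  case (Neg \<phi>)
  then show ?case by (simp add: terms_Neg)
next
  case (Conj \<phi> \<psi>)
  have "order_similar_on (terms \<phi>) (tval e) (tval e')" "order_similar_on (terms \<psi>) (tval e) (tval e')"
    using Conj.prems order_similar_on_subset unfolding terms_Conj by blast+
  then show ?case using Conj.IH by simp
next
  case (Ex \<phi>)
  have "eval e' (Ex \<phi>)" if "eval e (Ex \<phi>)"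
    and sim: "order_similar_on (terms (Ex \<phi>)) (tval e) (tval e')" for e e'
  proof -
    obtain q where "eval (case_nat q e) \<phi>" using \<open>eval e (Ex \<phi>)\<close> by auto
    moreover obtain q' where "order_similar_on (terms \<phi>) (tval (case_nat q e)) (tval (case_nat q' e'))"
      using order_similar_on_terms_Ex[OF sim] by blast
    ultimately show ?thesis using Ex.IH by auto
  qed
  then show ?case using Ex.prems order_similar_on_sym by blast
qed

lemma is_type_finitely_satisfiable:
  "is_type n p \<Longrightarrow> finite F \<Longrightarrow> F \<subseteq> p \<Longrightarrow> \<exists>e. \<forall>\<phi>\<in>F. eval e \<phi>"
  unfolding is_type_def by blast

lemma is_type_complete: "is_type n p \<Longrightarrow> fvars \<phi> \<subseteq> {..<n} \<Longrightarrow> \<phi> \<notin> p \<Longrightarrow> Neg \<phi> \<in> p"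
  unfolding is_type_def by blast

lemma is_type_fvars: "is_type n p \<Longrightarrow> \<phi> \<in> p \<Longrightarrow> fvars \<phi> \<subseteq> {..<n}"
  unfolding is_type_def by blast

lemma is_type_realises:
  assumes p: "is_type n p" and "finite F" "F \<subseteq> p" "finite L" "\<forall>\<psi>\<in>L. fvars \<psi> \<subseteq> {..<n}"
  shows "\<exists>e. (\<forall>\<phi>\<in>F. eval e \<phi>) \<and> (\<forall>\<psi>\<in>L. eval e \<psi> \<longleftrightarrow> \<psi> \<in> p)"
proof -
  define G where "G = F \<union> (L \<inter> p) \<union> Neg ` (L - p)"
  have "Neg \<psi> \<in> p" if "\<psi> \<in> L - p" for \<psi>
    using that assms(5) is_type_complete[OF p] by simp
  then have "G \<subseteq> p" using assms(3) unfolding G_def by blast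
  moreover have "finite G" using assms(2,4) unfolding G_def by simp
  ultimately obtain e where e: "\<forall>\<phi>\<in>G. eval e \<phi>"
    using is_type_finitely_satisfiable[OF p] by blast
  have "eval e \<psi> \<longleftrightarrow> \<psi> \<in> p" if "\<psi> \<in> L" for \<psi>
  proof (cases "\<psi> \<in> p")
    case True
    then show ?thesis using e that unfolding G_def by simp
  next
    case False
    then have "Neg \<psi> \<in> G" using that unfolding G_def by blast
    then show ?thesis using e False by fastforce
  qed
  moreover have "\<forall>\<phi>\<in>F. eval e \<phi>" using e unfolding G_def by simp
  ultimately show ?thesis by blast
qed

lemma is_type_subset_if_atoms:
  assumes tp: "is_type n p" and tq: "is_type n q"
    and atoms: "\<And>s t. tfv s \<subseteq> {..<n} \<Longrightarrow> tfv t \<subseteq> {..<n} \<Longrightarrow> Le s t \<in> p \<longleftrightarrow> Le s t \<in> q"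
  shows "p \<subseteq> q"
proof
  fix \<phi> assume "\<phi> \<in> p"
  show "\<phi> \<in> q"
  proof (rule ccontr)
    assume "\<phi> \<notin> q"
    have fv: "fvars \<phi> \<subseteq> {..<n}" using is_type_fvars[OF tp \<open>\<phi> \<in> p\<close>] .
    then have "Neg \<phi> \<in> q" using is_type_complete[OF tq _ \<open>\<phi> \<notin> q\<close>] by blast
    define L where "L = (\<lambda>(s, t). Le s t) ` (terms \<phi> \<times> terms \<phi>)"
    have L: "finite L" "\<forall>\<psi>\<in>L. fvars \<psi> \<subseteq> {..<n}"
      using finite_terms fv tfv_subset_fvars unfolding L_def by fastforce+
    obtain e where e: "eval e \<phi>" "\<forall>\<psi>\<in>L. eval e \<psi> \<longleftrightarrow> \<psi> \<in> p"
      using is_type_realises[OF tp _ _ L, of "{\<phi>}"] \<open>\<phi> \<in> p\<close> by blast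
    obtain e' where e': "eval e' (Neg \<phi>)" "\<forall>\<psi>\<in>L. eval e' \<psi> \<longleftrightarrow> \<psi> \<in> q"
      using is_type_realises[OF tq _ _ L, of "{Neg \<phi>}"] \<open>Neg \<phi> \<in> q\<close> by blast
    have "Le s t \<in> p \<longleftrightarrow> Le s t \<in> q" if "s \<in> terms \<phi>" "t \<in> terms \<phi>" for s t
      using atoms fv tfv_subset_fvars[OF that(1)] tfv_subset_fvars[OF that(2)] by blast
    with e(2) e'(2) have "order_similar_on (terms \<phi>) (tval e) (tval e')"
      unfolding order_similar_on_def L_def by auto
    then show False using eval_order_similar e(1) e'(1) by simp
  qed
qed

lemma eval_lt_chain: "eval e (lt_chain n) \<longleftrightarrow> (\<forall>i. Suc i < n \<longrightarrow> e i < e (Suc i))"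
proof -
  have "eval e (foldr Conj xs b) \<longleftrightarrow> (\<forall>\<phi>\<in>set xs. eval e \<phi>) \<and> eval e b" for xs b
    by (induction xs) auto
  then show ?thesis unfolding lt_chain_def by (auto simp: Lt_def not_le less_diff_conv)
qed

lemma lt_chain_less: "eval e (lt_chain n) \<Longrightarrow> i < j \<Longrightarrow> j < n \<Longrightarrow> e i < e j"
proof (induction j)
  case (Suc j)
  then have "e j < e (Suc j)" using eval_lt_chain by blast
  then show ?case using Suc by (cases "i = j") auto
qed simp

lemma lt_chain_le_iff: "eval e (lt_chain n) \<Longrightarrow> i < n \<Longrightarrow> j < n \<Longrightarrow> e i \<le> e j \<longleftrightarrow> i \<le> j"
  using lt_chain_less[of e n i j] lt_chain_less[of e n j i] by (cases i j rule: linorder_cases) auto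

lemma lt_chain_type_Le_Var_iff:
  assumes "is_type n p" "lt_chain n \<in> p" "i < n" "j < n"
  shows "Le (Var i) (Var j) \<in> p \<longleftrightarrow> i \<le> j"
proof -
  obtain e where "eval e (lt_chain n)" "eval e (Le (Var i) (Var j)) \<longleftrightarrow> Le (Var i) (Var j) \<in> p"
    using is_type_realises[of n p "{lt_chain n}" "{Le (Var i) (Var j)}"] assms by auto
  then show ?thesis using lt_chain_le_iff assms(3,4) by simp
qed

lemma is_type_Le_Par_iff:
  assumes "is_type n p"
  shows "Le (Par a) (Par b) \<in> p \<longleftrightarrow> a \<le> b"
  using is_type_realises[of n p "{}" "{Le (Par a) (Par b)}"] assms by auto

lemma proj_eq_Le_Var_Par:
  assumes "proj \<rho> k p = proj \<rho> k q" "j < k"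
  shows "(Le (Var (\<rho> j)) (Par a) \<in> p \<longleftrightarrow> Le (Var (\<rho> j)) (Par a) \<in> q) \<and>
    (Le (Par a) (Var (\<rho> j)) \<in> p \<longleftrightarrow> Le (Par a) (Var (\<rho> j)) \<in> q)"
proof -
  have "Le (Var j) (Par a) \<in> proj \<rho> k p \<longleftrightarrow> Le (Var j) (Par a) \<in> proj \<rho> k q"
    "Le (Par a) (Var j) \<in> proj \<rho> k p \<longleftrightarrow> Le (Par a) (Var j) \<in> proj \<rho> k q"
    using assms(1) by simp_all
  then show ?thesis using assms(2) unfolding proj_def by simp
qed

lemma nabla_eq_Le_Var_Par:
  assumes "nabla n p = nabla n q" "i < n"
  shows "(Le (Var i) (Par a) \<in> p \<longleftrightarrow> Le (Var i) (Par a) \<in> q) \<and>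
    (Le (Par a) (Var i) \<in> p \<longleftrightarrow> Le (Par a) (Var i) \<in> q)"
proof (cases i)
  case 0
  have "proj (\<lambda>i. i) 1 p = proj (\<lambda>i. i) 1 q" using assms(1) unfolding nabla_def by simp
  from proj_eq_Le_Var_Par[OF this zero_less_one] show ?thesis using 0 by simp
next
  case (Suc k)
  have "proj Suc (n - 1) p = proj Suc (n - 1) q" using assms(1) unfolding nabla_def by simp
  from proj_eq_Le_Var_Par[OF this, of k] show ?thesis using Suc assms(2) by simp
qed

theorem mainTheorem13:
  fixes n :: nat
  assumes "n \<ge> 2"
  shows "inj_on (nabla n) (S_lt n)"
proof (rule inj_onI)
  fix p q assume "p \<in> S_lt n" "q \<in> S_lt n" and nabla: "nabla n p = nabla n q"
  then have p: "is_type n p" "lt_chain n \<in> p" and q: "is_type n q" "lt_chain n \<in> q"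
    unfolding S_lt_def S_fd_def S_def by auto
  show "p = q"
  proof -
    have atoms: "Le s t \<in> p \<longleftrightarrow> Le s t \<in> q" if "tfv s \<subseteq> {..<n}" "tfv t \<subseteq> {..<n}" for s t
      using that lt_chain_type_Le_Var_iff[OF p] lt_chain_type_Le_Var_iff[OF q]
        is_type_Le_Par_iff[OF p(1)] is_type_Le_Par_iff[OF q(1)] nabla_eq_Le_Var_Par[OF nabla]
      by (cases s; cases t) simp_all
    show ?thesis
      using is_type_subset_if_atoms[OF p(1) q(1) atoms] is_type_subset_if_atoms[OF q(1) p(1) atoms[symmetric]]
      by blast
  qed
qed

end
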